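(* Let $T\ge2$ and let $n\ge2T^2$ be an integer. Then for every $|x|\le T$, $$\int_{|y|\ge 2T}k_n(x,y)^2\,dy\le\frac{2}{\pi^2T}+\frac{12T^2}{\sqrt{2n+1}}\ln(2n+1).$$
   Context: For an integer $n\ge0$, $H_n(x)=(-1)^n e^{x^2}\frac{d^n}{dx^n}e^{-x^2}$ is the $n$-th Hermite polynomial and $h_n(x)=\frac{1}{\pi^{1/4}\sqrt{2^n n!}}H_n(x)e^{-x^2/2}$ is the $n$-th Hermite function; $(h_n)_{n\ge0}$ is an orthonormal basis of $L^2(\mathbb R)$. The kernel $k_n(x,y)=\sum_{k=0}^n h_k(x)h_k(y)$ is the kernel of the orthogonal projection of $L^2(\mathbb R)$ onto $\mathrm{span}(h_0,\dots,h_n)$. *)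

theory Defs
  imports "HOL-Analysis.Analysis"
begin

definition hermite_poly :: "nat \<Rightarrow> real \<Rightarrow> real" where
  "hermite_poly n x = (-1) ^ n * exp (x\<^sup>2) * ((deriv ^^ n) (\<lambda>t. exp (- (t\<^sup>2))) x)"

definition hermite_fun :: "nat \<Rightarrow> real \<Rightarrow> real" where
  "hermite_fun n x = hermite_poly n x * exp (- (x\<^sup>2) / 2)
      / (root 4 pi * sqrt (2 ^ n * fact n))"

definition hermite_kernel :: "nat \<Rightarrow> real \<Rightarrow> real \<Rightarrow> real" where
  "hermite_kernel n x y = (\<Sum>k\<le>n. hermite_fun k x * hermite_fun k y)"

end

theory Submission
  imports Defs "HOL-Computational_Algebra.Polynomial" "HOL-Probability.Distributions"
begin

text \<open>By the Christoffel--Darboux formula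
  \<open>(x - y) k\<^sub>n(x,y) = \<surd>((n+1)/2) (h\<^sub>n\<^sub>+\<^sub>1(x) h\<^sub>n(y) - h\<^sub>n(x) h\<^sub>n\<^sub>+\<^sub>1(y))\<close>,
  so off the diagonal the kernel is controlled by \<open>h\<^sub>n\<close> and \<open>h\<^sub>n\<^sub>+\<^sub>1\<close>.
  The energy \<open>E(y) = (2n+1-y\<^sup>2) h\<^sub>n(y)\<^sup>2 + h\<^sub>n'(y)\<^sup>2\<close> has \<open>E' = -2y h\<^sub>n\<^sup>2\<close>, so it is
  maximal at \<open>0\<close>, where a Wallis-type estimate gives \<open>E(0) \<le> (2/3) \<surd>(2n+1)\<close>.
  In the bulk \<open>\<bar>y\<bar> \<le> \<surd>(2n+1)/2\<close> the energy bounds \<open>h\<^sub>n(y)\<^sup>2 + h\<^sub>n\<^sub>+\<^sub>1(y)\<^sup>2\<close> by \<open>O(E(0)/n)\<close>,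
  which dominates \<open>k\<^sub>n(x,y)\<^sup>2\<close> by \<open>c (1/(y-x)\<^sup>2 + 1/(\<surd>(2n+1) \<bar>y\<bar>))\<close>; integrating this over
  \<open>2T \<le> \<bar>y\<bar> \<le> \<surd>(2n+1)/2\<close> gives both terms of the bound. Beyond the bulk, Cauchy--Schwarz
  and \<open>\<parallel>h\<^sub>k\<parallel> = 1\<close> give \<open>O(1/\<surd>n)\<close>; when \<open>2n+1 < 64T\<^sup>2\<close> this far-field estimate alone
  covers the whole tail.\<close>

lemma diff_mult_sq_le: "(a * u - b * v)\<^sup>2 \<le> (a\<^sup>2 + b\<^sup>2) * (u\<^sup>2 + v\<^sup>2)" for a b u v :: real
proof -
  have "(a\<^sup>2 + b\<^sup>2) * (u\<^sup>2 + v\<^sup>2) - (a * u - b * v)\<^sup>2 = (a * v + b * u)\<^sup>2"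
    by (simp add: power2_eq_square algebra_simps)
  then show ?thesis
    by (metis diff_ge_0_iff_ge zero_le_power2)
qed

lemma sum_mult_sq_le_weighted:
  fixes p q u w s :: real
  assumes "s > 0"
  shows "(p * u + q * w)\<^sup>2 \<le> (p\<^sup>2 + q\<^sup>2 * s) * (u\<^sup>2 + w\<^sup>2 / s)"
proof -
  have "(p\<^sup>2 + q\<^sup>2 * s) * (u\<^sup>2 + w\<^sup>2 / s) - (p * u + q * w)\<^sup>2 = (p * w - q * s * u)\<^sup>2 / s"
    using assms by (simp add: field_simps power2_eq_square)
  then show ?thesis
    using assms by (metis diff_ge_0_iff_ge divide_nonneg_pos zero_le_power2)
qed

lemma young_sq_sum_le:
  fixes a b w x c e :: real
  assumes c: "c > 0" and e: "e > 0" and a: "a = (x * b - w) / c"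
  shows "a\<^sup>2 + b\<^sup>2 \<le> (1 + x\<^sup>2 * (1 + 1 / e) / c\<^sup>2) * b\<^sup>2 + (1 + e) / c\<^sup>2 * w\<^sup>2"
proof -
  have "0 \<le> (e * w + x * b)\<^sup>2 / e"
    using e by simp
  also have "(e * w + x * b)\<^sup>2 / e = e * w\<^sup>2 + 2 * (x * b) * w + (x * b)\<^sup>2 / e"
    using e by (simp add: field_simps power2_eq_square)
  finally have "(x * b - w)\<^sup>2 \<le> (x * b)\<^sup>2 * (1 + 1 / e) + (1 + e) * w\<^sup>2"
    by (simp add: power2_eq_square algebra_simps add_divide_distrib)
  then have "a\<^sup>2 \<le> ((x * b)\<^sup>2 * (1 + 1 / e) + (1 + e) * w\<^sup>2) / c\<^sup>2"
    unfolding a power_divide using c by (simp add: divide_right_mono)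
  then show ?thesis
    by (simp add: power_mult_distrib add_divide_distrib algebra_simps)
qed

lemma one_plus_le_mult_one_minus_sq:
  fixes t :: real
  assumes "0 \<le> t" and "t \<le> 1 / 2"
  shows "1 + t \<le> (1 + 2 * t) * (1 - t\<^sup>2)"
proof -
  have "(1 + 2 * t) * (1 - t\<^sup>2) - (1 + t) = t * (1 + t) * (1 - 2 * t)"
    by (simp add: power2_eq_square algebra_simps)
  moreover have "t * (1 + t) * (1 - 2 * t) \<ge> 0"
    using assms by simp
  ultimately show ?thesis
    by linarith
qed

lemma inverse_add_inverse_le:
  fixes x T :: real
  assumes "\<bar>x\<bar> \<le> T" and "T > 0"
  shows "1 / (2 * T - x) + 1 / (2 * T + x) \<le> 4 / (3 * T)"
proof -
  have "x\<^sup>2 \<le> T\<^sup>2"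
    using assms by (metis abs_le_square_iff abs_of_pos)
  moreover have "T\<^sup>2 > 0"
    using assms(2) by simp
  ultimately have "x\<^sup>2 < 4 * T\<^sup>2"
    by linarith
  have "2 * T - x > 0" and "2 * T + x > 0"
    using assms by auto
  then have "1 / (2 * T - x) + 1 / (2 * T + x) = 4 * T / (4 * T\<^sup>2 - x\<^sup>2)"
    by (simp add: field_simps power2_eq_square)
  also have "\<dots> \<le> 4 * T / (3 * T\<^sup>2)"
    using \<open>x\<^sup>2 < 4 * T\<^sup>2\<close> \<open>x\<^sup>2 \<le> T\<^sup>2\<close> assms(2) by (intro divide_left_mono mult_pos_pos) auto
  also have "\<dots> = 4 / (3 * T)"
    using assms(2) by (simp add: power2_eq_square)
  finally show ?thesis .
qed

lemma two_le_ln: "(l::real) \<ge> 17 \<Longrightarrow> ln l \<ge> 2"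
proof -
  assume "l \<ge> 17"
  have "exp (2::real) = exp 1 * exp 1"
    by (simp flip: exp_add)
  also have "\<dots> \<le> 3 * 3"
    using exp_le by (intro mult_mono) auto
  finally show ?thesis
    using \<open>l \<ge> 17\<close> by (simp add: ln_ge_iff)
qed

lemma set_integral_le_integral:
  fixes f :: "'a \<Rightarrow> real"
  assumes "A \<in> sets M" and "integrable M f" and "\<And>x. f x \<ge> 0"
  shows "(LINT x:A|M. f x) \<le> (LINT x|M. f x)"
  unfolding set_lebesgue_integral_def
  using assms by (intro integral_mono integrable_mult_indicator) (auto simp: indicator_def)

lemma integral_eq_0_of_has_real_derivative:
  fixes f F :: "real \<Rightarrow> real"
  assumes "\<And>x. (F has_real_derivative f x) (at x)" and "\<And>x. isCont f x"
    and "integrable lborel f" and "(F \<longlongrightarrow> 0) at_bot" and "(F \<longlongrightarrow> 0) at_top"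
  shows "(LINT x|lborel. f x) = 0"
proof -
  have "(LBINT x=-\<infinity>..\<infinity>. f x) = 0 - 0"
  proof (rule interval_integral_FTC_integrable[where F = F])
    show "(F has_vector_derivative f x) (at x)" for x
      using assms(1)[of x] by (simp add: has_real_derivative_iff_has_vector_derivative)
    show "set_integrable lborel (einterval (- \<infinity>) \<infinity>) f"
      unfolding set_integrable_def einterval_eq_UNIV using assms(3) by simp
    show "((F \<circ> real_of_ereal) \<longlongrightarrow> 0) (at_right (- \<infinity>))"
      using assms(4) by (simp add: ereal_tendsto_simps)
    show "((F \<circ> real_of_ereal) \<longlongrightarrow> 0) (at_left \<infinity>)"
      using assms(5) by (simp add: ereal_tendsto_simps)
  qed (use assms(2) in auto)
  then show ?thesis
    by (simp add: interval_lebesgue_integral_def set_lebesgue_integral_def)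
qed

lemma set_integral_abs_ge_split:
  fixes f :: "real \<Rightarrow> real"
  assumes "0 < a" and "a \<le> Y" and "\<And>A. A \<in> sets lborel \<Longrightarrow> set_integrable lborel A f"
  shows "(LINT y:{y. a \<le> \<bar>y\<bar>}|lborel. f y)
    = ((LINT y:{a..Y}|lborel. f y) + (LINT y:{-Y..-a}|lborel. f y)) + (LINT y:{y. Y < \<bar>y\<bar>}|lborel. f y)"
proof -
  have measurable: "{a..Y} \<in> sets lborel" "{-Y..-a} \<in> sets lborel" "{y. Y < \<bar>y\<bar>} \<in> sets lborel"
    by measurable
  have "{y. a \<le> \<bar>y\<bar>} = ({a..Y} \<union> {-Y..-a}) \<union> {y. Y < \<bar>y\<bar>}"
    using assms(2) by auto
  moreover have "(LINT y:({a..Y} \<union> {-Y..-a}) \<union> {y. Y < \<bar>y\<bar>}|lborel. f y)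
      = (LINT y:{a..Y} \<union> {-Y..-a}|lborel. f y) + (LINT y:{y. Y < \<bar>y\<bar>}|lborel. f y)"
    using assms measurable by (intro set_integral_Un set_integrable_Un) (auto simp: abs_if)
  moreover have "(LINT y:{a..Y} \<union> {-Y..-a}|lborel. f y) = (LINT y:{a..Y}|lborel. f y) + (LINT y:{-Y..-a}|lborel. f y)"
    using assms measurable by (intro set_integral_Un) auto
  ultimately show ?thesis
    by simp
qed

lemma integrable_gaussian_monomial: "integrable lborel (\<lambda>x::real. exp (- x\<^sup>2) * x ^ i)"
proof (cases "even i")
  case True
  then obtain k where k: "i = 2 * k" by (auto elim: evenE)
  have "has_bochner_integral lborel (\<lambda>x::real. exp (- x\<^sup>2) * x ^ (2 * k))
     (2 *\<^sub>R ((sqrt pi / 2) * (fact (2 * k) / (2 ^ (2 * k) * fact k))))"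
    by (rule has_bochner_integral_even_function[OF gaussian_moment_even_pos]) (simp add: power_mult)
  then show ?thesis unfolding k by (rule integrable.intros)
next
  case False
  then obtain k where k: "i = 2 * k + 1" by (auto elim: oddE)
  have "has_bochner_integral lborel (\<lambda>x::real. exp (- x\<^sup>2) * x ^ (2 * k + 1)) 0"
    by (rule has_bochner_integral_odd_function[OF gaussian_moment_odd_pos]) (simp add: power_mult)
  then show ?thesis unfolding k by (rule integrable.intros)
qed

lemma poly_times_gaussian_eq_sum:
  "poly p x * exp (- x\<^sup>2) = (\<Sum>i\<le>degree p. coeff p i * (x ^ i * exp (- x\<^sup>2)))"
  by (simp add: poly_altdef sum_distrib_left sum_distrib_right mult_ac)

lemma integrable_poly_gaussian: "integrable lborel (\<lambda>x::real. poly p x * exp (- x\<^sup>2))"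
  unfolding poly_times_gaussian_eq_sum
  by (intro Bochner_Integration.integrable_sum Bochner_Integration.integrable_mult_right)
    (use integrable_gaussian_monomial in \<open>simp add: mult.commute\<close>)

lemma tendsto_monomial_gaussian:
  assumes "filterlim (\<lambda>x::real. x\<^sup>2) at_top F"
  shows "((\<lambda>x::real. x ^ i * exp (- x\<^sup>2)) \<longlongrightarrow> 0) F"
proof (rule tendsto_0_le)
  show "((\<lambda>x. (x\<^sup>2) ^ i / exp (x\<^sup>2)) \<longlongrightarrow> 0) F"
    by (rule filterlim_compose[OF tendsto_power_div_exp_0 assms])
  have "eventually (\<lambda>x. x\<^sup>2 \<ge> 1) F"
    using assms by (simp add: filterlim_at_top)
  then show "eventually (\<lambda>x. norm (x ^ i * exp (- x\<^sup>2)) \<le> norm ((x\<^sup>2) ^ i / exp (x\<^sup>2)) * 1) F"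
  proof eventually_elim
    case (elim x)
    then have "\<bar>x\<bar> \<ge> 1"
      by (metis abs_le_square_iff abs_one one_power2)
    then have "\<bar>x\<bar> ^ i \<le> (\<bar>x\<bar> ^ 2) ^ i"
      using mult_left_mono[of 1 "\<bar>x\<bar>" "\<bar>x\<bar>"] by (intro power_mono) (auto simp: power2_eq_square)
    then show ?case
      by (simp add: abs_mult power_abs exp_minus field_simps)
  qed
qed

lemma tendsto_poly_gaussian:
  assumes "filterlim (\<lambda>x::real. x\<^sup>2) at_top F"
  shows "((\<lambda>x::real. poly p x * exp (- x\<^sup>2)) \<longlongrightarrow> 0) F"
  unfolding poly_times_gaussian_eq_sum
  using tendsto_sum[of "{..degree p}" "\<lambda>i x. coeff p i * (x ^ i * exp (- x\<^sup>2))" "\<lambda>_. 0" F]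
  by (simp add: tendsto_mult_right_zero tendsto_monomial_gaussian[OF assms])

section \<open>Hermite polynomials and the ladder relations\<close>

fun hermite_polynomial :: "nat \<Rightarrow> real poly" where
  "hermite_polynomial 0 = 1"
| "hermite_polynomial (Suc n) = [:0, 2:] * hermite_polynomial n - pderiv (hermite_polynomial n)"

lemma pderiv_hermite_polynomial:
  "pderiv (hermite_polynomial (Suc n)) = smult (2 * real (Suc n)) (hermite_polynomial n)"
proof (induction n)
  case 0
  then show ?case by (simp add: pderiv_pCons)
next
  case (Suc n)
  let ?H = hermite_polynomial
  have pderiv_times_2x: "pderiv ([:0, 2:] * q) = smult 2 q + [:0, 2:] * pderiv q" for q :: "real poly"
    by (simp add: pderiv_mult pderiv_pCons pderiv_smult)
  have "pderiv (?H (Suc (Suc n)))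
      = smult 2 (?H (Suc n)) + [:0, 2:] * pderiv (?H (Suc n)) - pderiv (pderiv (?H (Suc n)))"
    by (simp only: hermite_polynomial.simps(2)[of "Suc n"] pderiv_diff pderiv_times_2x)
  also have "\<dots> = smult 2 (?H (Suc n)) + smult (2 * real (Suc n)) ([:0, 2:] * ?H n - pderiv (?H n))"
    using Suc by (simp add: pderiv_smult algebra_simps smult_diff_right)
  also have "\<dots> = smult 2 (?H (Suc n)) + smult (2 * real (Suc n)) (?H (Suc n))"
    by (simp only: hermite_polynomial.simps(2))
  also have "\<dots> = smult (2 * real (Suc (Suc n))) (?H (Suc n))"
    by (simp only: smult_add_left[symmetric]) simp
  finally show ?case .
qed

lemma hermite_polynomial_Suc_Suc:
  "hermite_polynomial (Suc (Suc n))
     = [:0, 2:] * hermite_polynomial (Suc n) - smult (2 * real (Suc n)) (hermite_polynomial n)"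
  by (simp only: hermite_polynomial.simps(2)[of "Suc n"] pderiv_hermite_polynomial)

lemma higher_deriv_gaussian:
  "(deriv ^^ n) (\<lambda>t. exp (- (t\<^sup>2)))
     = (\<lambda>t. (-1) ^ n * poly (hermite_polynomial n) t * exp (- (t\<^sup>2)))"
proof (induction n)
  case (Suc n)
  have "((\<lambda>t. (-1) ^ n * poly (hermite_polynomial n) t * exp (- (t\<^sup>2))) has_real_derivative
          (-1) ^ Suc n * poly (hermite_polynomial (Suc n)) t * exp (- (t\<^sup>2))) (at t)" for t
    by (auto intro!: derivative_eq_intros simp: algebra_simps)
  then have "deriv (\<lambda>t. (-1) ^ n * poly (hermite_polynomial n) t * exp (- (t\<^sup>2)))
      = (\<lambda>t. (-1) ^ Suc n * poly (hermite_polynomial (Suc n)) t * exp (- (t\<^sup>2)))"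
    by (intro ext DERIV_imp_deriv)
  then show ?case using Suc by simp
qed simp

lemma hermite_poly_eq_poly: "hermite_poly n x = poly (hermite_polynomial n) x"
  unfolding hermite_poly_def higher_deriv_gaussian
  by (simp add: exp_minus field_simps flip: power_mult_distrib)

definition hermite_scale :: "nat \<Rightarrow> real" where
  "hermite_scale n = 1 / (root 4 pi * sqrt (2 ^ n * fact n))"

lemma hermite_fun_eq:
  "hermite_fun n x = hermite_scale n * poly (hermite_polynomial n) x * exp (- (x\<^sup>2) / 2)"
  unfolding hermite_fun_def hermite_scale_def hermite_poly_eq_poly by simp

lemma hermite_scale_eq_Suc: "hermite_scale n = sqrt (2 * real (Suc n)) * hermite_scale (Suc n)"
proof -
  have "sqrt (2 ^ Suc n * fact (Suc n)) = sqrt (2 ^ n * fact n) * sqrt (2 * real (Suc n))"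
    by (simp only: real_sqrt_mult[symmetric]) (simp add: algebra_simps)
  then show ?thesis unfolding hermite_scale_def by (simp add: field_simps)
qed

lemma hermite_fun_has_real_derivative:
  "(hermite_fun n has_real_derivative
     x * hermite_fun n x - sqrt (2 * real (Suc n)) * hermite_fun (Suc n) x) (at x)"
proof -
  let ?H = hermite_polynomial and ?g = "\<lambda>x. exp (- (x\<^sup>2) / 2)"
  have "hermite_fun n = (\<lambda>x. hermite_scale n * poly (?H n) x * ?g x)"
    by (simp add: hermite_fun_eq fun_eq_iff)
  moreover have "((\<lambda>x. hermite_scale n * poly (?H n) x * ?g x) has_real_derivative
      hermite_scale n * (poly (pderiv (?H n)) x * ?g x + poly (?H n) x * (?g x * (- x)))) (at x)"
    by (auto intro!: derivative_eq_intros simp: algebra_simps)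
  moreover have "pderiv (?H n) = [:0, 2:] * ?H n - ?H (Suc n)"
    by simp
  then have "hermite_scale n * (poly (pderiv (?H n)) x * ?g x + poly (?H n) x * (?g x * (- x)))
      = x * hermite_fun n x - sqrt (2 * real (Suc n)) * hermite_fun (Suc n) x"
    unfolding hermite_fun_eq hermite_scale_eq_Suc[of n] by (simp add: algebra_simps)
  ultimately show ?thesis
    by simp
qed

text \<open>For \<open>n = 0\<close> the truncated index \<open>n - 1 = 0\<close> is harmless: its coefficient is \<open>\<surd>0\<close>.\<close>
lemma hermite_fun_recurrence:
  "sqrt (2 * real (Suc n)) * hermite_fun (Suc n) x
     = 2 * x * hermite_fun n x - sqrt (2 * real n) * hermite_fun (n - 1) x"
proof (cases n)
  case 0
  then show ?thesis using hermite_scale_eq_Suc[of 0] by (simp add: hermite_fun_eq algebra_simps)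
next
  case (Suc m)
  let ?H = hermite_polynomial and ?g = "exp (- (x\<^sup>2) / 2)"
  have scale: "sqrt (2 * real (Suc m)) * hermite_scale m = 2 * real (Suc m) * hermite_scale (Suc m)"
    unfolding hermite_scale_eq_Suc[of m] by (simp add: algebra_simps)
  have "sqrt (2 * real (Suc n)) * hermite_fun (Suc n) x
      = hermite_scale (Suc m) * 2 * x * poly (?H (Suc m)) x * ?g
        - (2 * real (Suc m) * hermite_scale (Suc m)) * poly (?H m) x * ?g"
    unfolding Suc hermite_fun_eq hermite_polynomial_Suc_Suc hermite_scale_eq_Suc[of "Suc m"]
    by (simp add: algebra_simps)
  also have "\<dots> = 2 * x * hermite_fun n x - sqrt (2 * real n) * hermite_fun (n - 1) x"
    unfolding Suc hermite_fun_eq scale[symmetric] by (simp add: algebra_simps)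
  finally show ?thesis .
qed

lemma hermite_fun_Suc_has_real_derivative:
  "(hermite_fun (Suc n) has_real_derivative
     sqrt (2 * real (Suc n)) * hermite_fun n x - x * hermite_fun (Suc n) x) (at x)"
proof -
  have "x * hermite_fun (Suc n) x - sqrt (2 * real (Suc (Suc n))) * hermite_fun (Suc (Suc n)) x
      = sqrt (2 * real (Suc n)) * hermite_fun n x - x * hermite_fun (Suc n) x"
    using hermite_fun_recurrence[of "Suc n" x] by simp
  with hermite_fun_has_real_derivative[of "Suc n" x] show ?thesis
    by (simp only:)
qed

lemma hermite_kernel_Christoffel_Darboux:
  "(x - y) * hermite_kernel n x y = sqrt (2 * real (Suc n)) / 2 *
     (hermite_fun (Suc n) x * hermite_fun n y - hermite_fun n x * hermite_fun (Suc n) y)"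
proof (induction n)
  case 0
  have "sqrt 2 * hermite_fun 1 x = 2 * x * hermite_fun 0 x"
    and "sqrt 2 * hermite_fun 1 y = 2 * y * hermite_fun 0 y"
    using hermite_fun_recurrence[of 0 x] hermite_fun_recurrence[of 0 y] by simp_all
  then show ?case unfolding hermite_kernel_def by (simp add: algebra_simps)
next
  case (Suc n)
  define s where "s = sqrt (2 * real (Suc n))"
  define t where "t = sqrt (2 * real (Suc (Suc n)))"
  have rec: "t * hermite_fun (Suc (Suc n)) z = 2 * z * hermite_fun (Suc n) z - s * hermite_fun n z" for z
    using hermite_fun_recurrence[of "Suc n" z] unfolding s_def t_def by simp
  have "(x - y) * hermite_kernel (Suc n) x y
      = (x - y) * hermite_kernel n x y + (x - y) * hermite_fun (Suc n) x * hermite_fun (Suc n) y"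
    unfolding hermite_kernel_def by (simp add: algebra_simps)
  also have "\<dots> = s / 2 * (hermite_fun (Suc n) x * hermite_fun n y - hermite_fun n x * hermite_fun (Suc n) y)
      + (x - y) * hermite_fun (Suc n) x * hermite_fun (Suc n) y"
    using Suc.IH unfolding s_def by simp
  also have "\<dots> = ((t * hermite_fun (Suc (Suc n)) x) * hermite_fun (Suc n) y
      - hermite_fun (Suc n) x * (t * hermite_fun (Suc (Suc n)) y)) / 2"
    unfolding rec by (simp add: algebra_simps)
  finally show ?case unfolding t_def by (simp add: field_simps)
qed

lemma continuous_on_hermite_fun [continuous_intros]: "continuous_on S (\<lambda>y. hermite_fun k y)"
  by (intro continuous_at_imp_continuous_on ballI DERIV_isCont[OF hermite_fun_has_real_derivative])

section \<open>The energy of a Hermite function\<close>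

text \<open>The second square is \<open>h\<^sub>n'(y)\<^sup>2\<close>, so this is the energy of the oscillator
  \<open>h\<^sub>n'' = (y\<^sup>2 - (2n+1)) h\<^sub>n\<close>.\<close>
definition hermite_energy :: "nat \<Rightarrow> real \<Rightarrow> real" where
  "hermite_energy n y = (2 * real n + 1 - y\<^sup>2) * (hermite_fun n y)\<^sup>2
     + (y * hermite_fun n y - sqrt (2 * real (Suc n)) * hermite_fun (Suc n) y)\<^sup>2"

lemma hermite_energy_has_real_derivative:
  "(hermite_energy n has_real_derivative - 2 * y * (hermite_fun n y)\<^sup>2) (at y)"
proof -
  define c where "c = sqrt (2 * real (Suc n))"
  define u where "u = hermite_fun n y"
  define v where "v = hermite_fun (Suc n) y"
  have energy: "hermite_energy n = (\<lambda>y. (2 * real n + 1 - y\<^sup>2) * (hermite_fun n y)\<^sup>2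
      + (y * hermite_fun n y - c * hermite_fun (Suc n) y)\<^sup>2)"
    unfolding hermite_energy_def c_def by auto
  have deriv: "((\<lambda>y. (2 * real n + 1 - y\<^sup>2) * (hermite_fun n y)\<^sup>2
      + (y * hermite_fun n y - c * hermite_fun (Suc n) y)\<^sup>2) has_real_derivative
     - (2 * y) * u\<^sup>2 + (2 * real n + 1 - y\<^sup>2) * (2 * u * (y * u - c * v))
      + 2 * (y * u - c * v) * (u + y * (y * u - c * v) - c * (c * u - y * v))) (at y)"
    (is "(_ has_real_derivative ?D) _")
    unfolding u_def v_def c_def
    by (auto intro!: derivative_eq_intros hermite_fun_has_real_derivative
        hermite_fun_Suc_has_real_derivative simp: power2_eq_square algebra_simps)
  have second: "u + y * (y * u - c * v) - c * (c * u - y * v) = (y\<^sup>2 - (2 * real n + 1)) * u"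
  proof -
    have "c * c = 2 * real n + 2"
      unfolding c_def by simp
    then have ccu: "c * (c * u) = (2 * real n + 2) * u"
      by (simp flip: mult.assoc)
    have "u + y * (y * u - c * v) - c * (c * u - y * v) = u + y\<^sup>2 * u - c * (c * u)"
      by (simp add: algebra_simps power2_eq_square)
    then show ?thesis
      unfolding ccu by (simp add: algebra_simps)
  qed
  have "?D = - 2 * y * u\<^sup>2"
    unfolding second by (simp add: algebra_simps power2_eq_square)
  with deriv show ?thesis
    unfolding energy u_def by (simp only:)
qed

lemma hermite_energy_le_at_zero: "hermite_energy n y \<le> hermite_energy n 0"
proof (cases "y \<ge> 0")
  case True
  show ?thesis
    by (rule DERIV_nonpos_imp_nonincreasing[OF True])
      (use hermite_energy_has_real_derivative in \<open>force intro: mult_nonneg_nonneg\<close>)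
next
  case False
  show ?thesis
    by (rule DERIV_nonneg_imp_nondecreasing[of y 0])
      (use False hermite_energy_has_real_derivative in \<open>force intro: mult_nonpos_nonneg\<close>)+
qed

lemma hermite_fun_at_zero_recurrence:
  "real (Suc k) * (hermite_fun (Suc k) 0)\<^sup>2 = real k * (hermite_fun (k - 1) 0)\<^sup>2"
proof -
  have "sqrt (2 * real (Suc k)) * hermite_fun (Suc k) 0 = - (sqrt (2 * real k) * hermite_fun (k - 1) 0)"
    using hermite_fun_recurrence[of k 0] by simp
  then have "(sqrt (2 * real (Suc k)) * hermite_fun (Suc k) 0)\<^sup>2
      = (sqrt (2 * real k) * hermite_fun (k - 1) 0)\<^sup>2"
    by simp
  then show ?thesis
    by (simp add: power_mult_distrib algebra_simps)
qed

lemma hermite_fun_odd_at_zero: "hermite_fun (2 * m + 1) 0 = 0"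
proof (induction m)
  case 0
  show ?case using hermite_fun_at_zero_recurrence[of 0] by simp
next
  case (Suc m)
  show ?case using hermite_fun_at_zero_recurrence[of "2 * m + 2"] Suc by simp
qed

lemma hermite_fun_even_at_zero_Suc:
  "(hermite_fun (2 * Suc m) 0)\<^sup>2 = (2 * real m + 1) / (2 * real m + 2) * (hermite_fun (2 * m) 0)\<^sup>2"
  using hermite_fun_at_zero_recurrence[of "2 * m + 1"] by (simp add: field_simps)

text \<open>Since \<open>h\<^sub>2\<^sub>m(0)\<^sup>2 = binom(2m,m) / (4\<^sup>m \<surd>\<pi>)\<close>, this is the classical bound
  \<open>binom(2m,m) / 4\<^sup>m \<le> 1 / \<surd>(3m+1)\<close>.\<close>
lemma hermite_fun_even_at_zero_bound: "(hermite_fun (2 * m) 0) ^ 4 * pi * (3 * real m + 1) \<le> 1"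
proof (induction m)
  case 0
  have "root 4 pi ^ 4 = pi"
    by (simp add: real_root_pow_pos2)
  then show ?case
    by (simp add: hermite_fun_eq hermite_scale_def power_divide)
next
  case (Suc m)
  have p4: "a ^ 4 = (a\<^sup>2)\<^sup>2" for a :: real
    by (simp flip: power_mult)
  define X where "X = ((hermite_fun (2 * m) 0)\<^sup>2)\<^sup>2 * pi"
  have "X \<ge> 0"
    unfolding X_def by simp
  have "(2 * real m + 1)\<^sup>2 * (3 * real m + 4) \<le> (2 * real m + 2)\<^sup>2 * (3 * real m + 1)"
    by (simp add: power2_eq_square algebra_simps)
  then have "(2 * real m + 1)\<^sup>2 * (3 * real m + 4) * X \<le> (2 * real m + 2)\<^sup>2 * (3 * real m + 1) * X"
    using \<open>X \<ge> 0\<close> by (rule mult_right_mono)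
  also have "\<dots> \<le> (2 * real m + 2)\<^sup>2"
    using Suc.IH unfolding X_def p4 by (simp add: mult_ac mult_left_le)
  finally have "(2 * real m + 1)\<^sup>2 * (3 * real m + 4) * X / (2 * real m + 2)\<^sup>2 \<le> 1"
    by simp
  moreover have "(hermite_fun (2 * Suc m) 0) ^ 4 * pi * (3 * real (Suc m) + 1)
      = (2 * real m + 1)\<^sup>2 * (3 * real m + 4) * X / (2 * real m + 2)\<^sup>2"
    unfolding p4 hermite_fun_even_at_zero_Suc X_def by (simp add: field_simps power2_eq_square)
  ultimately show ?case
    by simp
qed

lemma hermite_energy_at_zero:
  "hermite_energy n 0 = (2 * real n + 1) * (hermite_fun n 0)\<^sup>2 + 2 * real (Suc n) * (hermite_fun (Suc n) 0)\<^sup>2"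
  unfolding hermite_energy_def by (simp add: power_mult_distrib)

lemma hermite_energy_at_zero_nonneg: "hermite_energy n 0 \<ge> 0"
  unfolding hermite_energy_at_zero by simp

lemma hermite_energy_at_zero_sq_le: "(hermite_energy n 0)\<^sup>2 * pi \<le> 4 / 3 * (2 * real n + 1)"
proof -
  txt \<open>Odd Hermite functions vanish at \<open>0\<close>, so for either parity of \<open>n\<close> the energy at \<open>0\<close>
    is a multiple of some \<open>h\<^sub>2\<^sub>m(0)\<^sup>2\<close>.\<close>
  obtain m c where mc: "hermite_energy n 0 = c * (hermite_fun (2 * m) 0)\<^sup>2"
    and c: "c\<^sup>2 / (3 * real m + 1) \<le> 4 / 3 * (2 * real n + 1)"
  proof (cases "even n")
    case True
    then obtain m where "n = 2 * m" by (auto elim: evenE)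
    moreover have "hermite_fun (2 * m + 1) 0 = 0"
      by (rule hermite_fun_odd_at_zero)
    ultimately show ?thesis
      by (intro that[where m = m and c = "4 * real m + 1"])
        (simp_all add: hermite_energy_at_zero field_simps power2_eq_square)
  next
    case False
    then obtain m where n: "n = 2 * m + 1" by (auto elim: oddE)
    have "hermite_fun n 0 = 0"
      unfolding n by (rule hermite_fun_odd_at_zero)
    moreover have "(hermite_fun (Suc n) 0)\<^sup>2 = (2 * real m + 1) / (2 * real m + 2) * (hermite_fun (2 * m) 0)\<^sup>2"
      using hermite_fun_even_at_zero_Suc[of m] unfolding n by simp
    ultimately show ?thesis
      by (intro that[where m = m and c = "2 * (2 * real m + 1)"])
        (simp_all add: hermite_energy_at_zero n field_simps power2_eq_square)
  qed
  have "(hermite_energy n 0)\<^sup>2 * pi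
      = c\<^sup>2 / (3 * real m + 1) * ((hermite_fun (2 * m) 0) ^ 4 * pi * (3 * real m + 1))"
    unfolding mc by (simp add: field_simps power2_eq_square power4_eq_xxxx)
  also have "\<dots> \<le> c\<^sup>2 / (3 * real m + 1)"
    using hermite_fun_even_at_zero_bound[of m] by (intro mult_left_le) auto
  finally show ?thesis
    using c by linarith
qed

lemma hermite_energy_at_zero_le: "hermite_energy n 0 \<le> 2 / 3 * sqrt (2 * real n + 1)"
proof (rule power2_le_imp_le)
  have "(hermite_energy n 0)\<^sup>2 * 3 \<le> (hermite_energy n 0)\<^sup>2 * pi"
    using pi_gt3 by (intro mult_left_mono) auto
  moreover have "(2 / 3 * sqrt (2 * real n + 1))\<^sup>2 = 4 / 9 * (2 * real n + 1)"
    by (simp add: power_mult_distrib power2_eq_square)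
  ultimately show "(hermite_energy n 0)\<^sup>2 \<le> (2 / 3 * sqrt (2 * real n + 1))\<^sup>2"
    using hermite_energy_at_zero_sq_le[of n] by linarith
qed simp

lemma hermite_fun_mult_eq:
  "hermite_fun n y * hermite_fun m y
     = hermite_scale n * hermite_scale m * (poly (hermite_polynomial n * hermite_polynomial m) y * exp (- y\<^sup>2))"
proof -
  have "exp (- (y\<^sup>2) / 2) * exp (- (y\<^sup>2) / 2) = exp (- y\<^sup>2)"
    by (simp flip: exp_add)
  then show ?thesis
    unfolding hermite_fun_eq by (simp add: algebra_simps)
qed

lemma integrable_hermite_fun_mult: "integrable lborel (\<lambda>y. hermite_fun n y * hermite_fun m y)"
  unfolding hermite_fun_mult_eq by (intro integrable_mult_right integrable_poly_gaussian)

lemma integrable_hermite_fun_sq: "integrable lborel (\<lambda>y. (hermite_fun n y)\<^sup>2)"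
  using integrable_hermite_fun_mult[of n n] by (simp add: power2_eq_square)

lemma tendsto_hermite_fun_mult:
  assumes "filterlim (\<lambda>x::real. x\<^sup>2) at_top F"
  shows "((\<lambda>y. hermite_fun n y * hermite_fun m y) \<longlongrightarrow> 0) F"
  unfolding hermite_fun_mult_eq by (intro tendsto_mult_right_zero tendsto_poly_gaussian assms)

text \<open>By the ladder relations \<open>(h\<^sub>n h\<^sub>n\<^sub>+\<^sub>1)' = \<surd>(2n+2) (h\<^sub>n\<^sup>2 - h\<^sub>n\<^sub>+\<^sub>1\<^sup>2)\<close>, and \<open>h\<^sub>n h\<^sub>n\<^sub>+\<^sub>1\<close>
  vanishes at \<open>\<plusminus>\<infinity>\<close>.\<close>
lemma integral_hermite_fun_sq_Suc:
  "(LINT y|lborel. (hermite_fun (Suc n) y)\<^sup>2) = (LINT y|lborel. (hermite_fun n y)\<^sup>2)"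
proof -
  define c where "c = sqrt (2 * real (Suc n))"
  have "c > 0"
    unfolding c_def by simp
  define f where "f = (\<lambda>y. (hermite_fun (Suc n) y)\<^sup>2 - (hermite_fun n y)\<^sup>2)"
  have "((\<lambda>y. - (hermite_fun n y * hermite_fun (Suc n) y) / c) has_real_derivative f y) (at y)" for y
  proof -
    have "(hermite_fun n has_real_derivative y * hermite_fun n y - c * hermite_fun (Suc n) y) (at y)"
      and "(hermite_fun (Suc n) has_real_derivative c * hermite_fun n y - y * hermite_fun (Suc n) y) (at y)"
      unfolding c_def by (rule hermite_fun_has_real_derivative hermite_fun_Suc_has_real_derivative)+
    then have "((\<lambda>y. - (hermite_fun n y * hermite_fun (Suc n) y) / c) has_real_derivative
        - ((y * hermite_fun n y - c * hermite_fun (Suc n) y) * hermite_fun (Suc n) y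
          + hermite_fun n y * (c * hermite_fun n y - y * hermite_fun (Suc n) y)) / c) (at y)"
      using \<open>c > 0\<close> by (auto intro!: derivative_eq_intros simp: field_simps)
    moreover have "- ((y * hermite_fun n y - c * hermite_fun (Suc n) y) * hermite_fun (Suc n) y
        + hermite_fun n y * (c * hermite_fun n y - y * hermite_fun (Suc n) y)) / c = f y"
      unfolding f_def using \<open>c > 0\<close> by (simp add: field_simps power2_eq_square)
    ultimately show ?thesis
      by simp
  qed
  moreover have "isCont (hermite_fun k) y" for k y
    by (rule DERIV_isCont[OF hermite_fun_has_real_derivative])
  then have "isCont f y" for y
    unfolding f_def by (intro continuous_intros)
  moreover have "integrable lborel f"
    unfolding f_def by (intro Bochner_Integration.integrable_diff integrable_hermite_fun_sq)
  moreover have "((\<lambda>y. - (hermite_fun n y * hermite_fun (Suc n) y) / c) \<longlongrightarrow> 0) F"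
    if "filterlim (\<lambda>x::real. x\<^sup>2) at_top F" for F
    using tendsto_divide[OF tendsto_minus[OF tendsto_hermite_fun_mult[OF that]] tendsto_const, of c]
      \<open>c > 0\<close> by simp
  then have "((\<lambda>y. - (hermite_fun n y * hermite_fun (Suc n) y) / c) \<longlongrightarrow> 0) at_bot"
    and "((\<lambda>y. - (hermite_fun n y * hermite_fun (Suc n) y) / c) \<longlongrightarrow> 0) at_top"
    using filterlim_pow_at_bot_even[OF _ filterlim_ident, of 2] filterlim_pow_at_top[OF _ filterlim_ident, of 2]
    by auto
  ultimately have "(LINT y|lborel. f y) = 0"
    by (rule integral_eq_0_of_has_real_derivative)
  then show ?thesis
    unfolding f_def using integrable_hermite_fun_sq by (simp add: Bochner_Integration.integral_diff)
qed

lemma integral_hermite_fun_sq: "(LINT y|lborel. (hermite_fun n y)\<^sup>2) = 1"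
proof (induction n)
  case 0
  have gauss: "has_bochner_integral lborel (\<lambda>x::real. exp (- x\<^sup>2)) (2 *\<^sub>R (sqrt pi / 2))"
    by (rule has_bochner_integral_even_function[OF gaussian_moment_0]) simp
  have "root 4 pi = sqrt (sqrt pi)"
    using real_root_mult_exp[of 2 2 pi] by (simp add: sqrt_def)
  then have "root 4 pi * root 4 pi = sqrt pi"
    by simp
  then have "hermite_scale 0 * hermite_scale 0 = 1 / sqrt pi"
    unfolding hermite_scale_def by simp
  moreover have "(LINT y|lborel. (hermite_fun 0 y)\<^sup>2) = hermite_scale 0 * hermite_scale 0 * sqrt pi"
    using gauss by (simp add: power2_eq_square hermite_fun_mult_eq has_bochner_integral_integral_eq)
  ultimately show ?case
    by simp
next
  case (Suc n)
  then show ?case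
    using integral_hermite_fun_sq_Suc by simp
qed

definition hermite_pair_sq :: "nat \<Rightarrow> real \<Rightarrow> real" where
  "hermite_pair_sq n y = (hermite_fun n y)\<^sup>2 + (hermite_fun (Suc n) y)\<^sup>2"

lemma hermite_pair_sq_nonneg: "hermite_pair_sq n y \<ge> 0"
  unfolding hermite_pair_sq_def by simp

lemma integrable_hermite_pair_sq: "integrable lborel (hermite_pair_sq n)"
  unfolding hermite_pair_sq_def by (intro Bochner_Integration.integrable_add integrable_hermite_fun_sq)

lemma set_integrable_hermite_pair_sq: "A \<in> sets lborel \<Longrightarrow> set_integrable lborel A (hermite_pair_sq n)"
  unfolding set_integrable_def by (rule integrable_mult_indicator[OF _ integrable_hermite_pair_sq])

lemma set_integral_hermite_pair_sq_le:
  assumes "A \<in> sets lborel"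
  shows "(LINT y:A|lborel. hermite_pair_sq n y) \<le> 2"
proof -
  have "(LINT y:A|lborel. hermite_pair_sq n y) \<le> (LINT y|lborel. hermite_pair_sq n y)"
    using assms integrable_hermite_pair_sq hermite_pair_sq_nonneg by (intro set_integral_le_integral)
  also have "\<dots> = 2"
    unfolding hermite_pair_sq_def
    by (simp add: Bochner_Integration.integral_add integrable_hermite_fun_sq integral_hermite_fun_sq)
  finally show ?thesis .
qed

lemma integrable_hermite_kernel_sq: "integrable lborel (\<lambda>y. (hermite_kernel n x y)\<^sup>2)"
proof (rule Bochner_Integration.integrable_bound)
  let ?B = "\<lambda>y. (\<Sum>k\<le>n. (hermite_fun k x)\<^sup>2) * (\<Sum>k\<le>n. (hermite_fun k y)\<^sup>2)"
  show "integrable lborel ?B"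
    by (intro Bochner_Integration.integrable_mult_right Bochner_Integration.integrable_sum
        integrable_hermite_fun_sq)
  have "(hermite_kernel n x y)\<^sup>2 \<le> ?B y" for y
    unfolding hermite_kernel_def by (rule Cauchy_Schwarz_ineq_sum)
  then show "AE y in lborel. norm ((hermite_kernel n x y)\<^sup>2) \<le> norm (?B y)"
    by (simp add: sum_nonneg)
  have "continuous_on UNIV (\<lambda>y. (hermite_kernel n x y)\<^sup>2)"
    unfolding hermite_kernel_def by (intro continuous_intros)
  then show "(\<lambda>y. (hermite_kernel n x y)\<^sup>2) \<in> borel_measurable lborel"
    using borel_measurable_continuous_onI by simp
qed

lemma set_integrable_hermite_kernel_sq:
  "A \<in> sets lborel \<Longrightarrow> set_integrable lborel A (\<lambda>y. (hermite_kernel n x y)\<^sup>2)"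
  unfolding set_integrable_def by (rule integrable_mult_indicator[OF _ integrable_hermite_kernel_sq])

section \<open>Pointwise bounds on the kernel\<close>

lemma hermite_kernel_sq_eq:
  assumes "y \<noteq> x"
  shows "(hermite_kernel n x y)\<^sup>2 = real (Suc n) / 2 *
     (hermite_fun (Suc n) x * hermite_fun n y - hermite_fun n x * hermite_fun (Suc n) y)\<^sup>2 / (x - y)\<^sup>2"
proof -
  define D where "D = hermite_fun (Suc n) x * hermite_fun n y - hermite_fun n x * hermite_fun (Suc n) y"
  have "x - y \<noteq> 0"
    using assms by simp
  then have "hermite_kernel n x y = sqrt (2 * real (Suc n)) / 2 * D / (x - y)"
    using hermite_kernel_Christoffel_Darboux[of x y n] unfolding D_def by (simp add: field_simps)
  then have "(hermite_kernel n x y)\<^sup>2 = (sqrt (2 * real (Suc n)))\<^sup>2 / 4 * D\<^sup>2 / (x - y)\<^sup>2"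
    by (simp add: power_divide power_mult_distrib power2_eq_square algebra_simps)
  also have "\<dots> = real (Suc n) / 2 * D\<^sup>2 / (x - y)\<^sup>2"
    using \<open>x - y \<noteq> 0\<close> by (simp add: field_simps)
  finally show ?thesis
    unfolding D_def .
qed

lemma hermite_kernel_sq_le_far:
  assumes "y \<noteq> x"
  shows "(hermite_kernel n x y)\<^sup>2
    \<le> real (Suc n) / 2 * hermite_pair_sq n x * hermite_pair_sq n y / (x - y)\<^sup>2"
proof -
  have "(hermite_fun (Suc n) x * hermite_fun n y - hermite_fun n x * hermite_fun (Suc n) y)\<^sup>2
      \<le> hermite_pair_sq n x * hermite_pair_sq n y"
    using diff_mult_sq_le[of "hermite_fun (Suc n) x" "hermite_fun n y" "hermite_fun n x" "hermite_fun (Suc n) y"]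
    unfolding hermite_pair_sq_def by (simp add: add.commute)
  then show ?thesis
    unfolding hermite_kernel_sq_eq[OF assms] by (simp add: divide_right_mono mult.assoc)
qed

lemma set_integral_hermite_kernel_sq_le_far:
  assumes "A \<in> sets lborel" and "d > 0" and "\<And>y. y \<in> A \<Longrightarrow> d \<le> \<bar>x - y\<bar>"
  shows "(LINT y:A|lborel. (hermite_kernel n x y)\<^sup>2) \<le> real (Suc n) * hermite_pair_sq n x / d\<^sup>2"
proof -
  let ?C = "real (Suc n) / 2 * hermite_pair_sq n x / d\<^sup>2"
  have "(hermite_kernel n x y)\<^sup>2 \<le> ?C * hermite_pair_sq n y" if "y \<in> A" for y
  proof -
    have "d\<^sup>2 \<le> (x - y)\<^sup>2"
      using power_mono[OF assms(3)[OF that], of 2] \<open>d > 0\<close> by simp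
    moreover have "y \<noteq> x"
      using assms(2) assms(3)[OF that] by auto
    ultimately have "(hermite_kernel n x y)\<^sup>2
        \<le> real (Suc n) / 2 * hermite_pair_sq n x * hermite_pair_sq n y / d\<^sup>2"
      using hermite_kernel_sq_le_far[of y x n] \<open>d > 0\<close>
        divide_left_mono[of "d\<^sup>2" "(x - y)\<^sup>2" "real (Suc n) / 2 * hermite_pair_sq n x * hermite_pair_sq n y"]
      by (simp add: hermite_pair_sq_nonneg)
    then show ?thesis
      by simp
  qed
  then have "(LINT y:A|lborel. (hermite_kernel n x y)\<^sup>2) \<le> (LINT y:A|lborel. ?C * hermite_pair_sq n y)"
    using assms(1) by (intro set_integral_mono set_integrable_hermite_kernel_sq set_integrable_mult_right
        set_integrable_hermite_pair_sq)
  also have "\<dots> \<le> ?C * 2"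
    using assms(1) hermite_pair_sq_nonneg[of n x]
    by (simp only: set_integral_mult_right) (intro mult_left_mono set_integral_hermite_pair_sq_le; simp)
  finally show ?thesis
    by simp
qed

text \<open>Here \<open>w\<close> plays the role of \<open>h\<^sub>n'(y)\<close>, so that \<open>(l - y\<^sup>2) u\<^sup>2 + w\<^sup>2\<close> is the energy.\<close>
lemma bulk_cross_sq_le:
  fixes a b u w y c l :: real
  assumes s: "l - y\<^sup>2 > 0" and c: "c > 0" and lc: "l \<le> c\<^sup>2"
  shows "(a * u - b * ((y * u - w) / c))\<^sup>2
    \<le> (a\<^sup>2 + b\<^sup>2 + 2 * \<bar>a * b\<bar> * \<bar>y\<bar> / c) * (((l - y\<^sup>2) * u\<^sup>2 + w\<^sup>2) / (l - y\<^sup>2))"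
proof -
  define s where "s = l - y\<^sup>2"
  have "s > 0"
    using s unfolding s_def .
  have "a * u - b * ((y * u - w) / c) = (a - b * y / c) * u + (b / c) * w"
    using c by (simp add: field_simps)
  then have "(a * u - b * ((y * u - w) / c))\<^sup>2 \<le> ((a - b * y / c)\<^sup>2 + (b / c)\<^sup>2 * s) * (u\<^sup>2 + w\<^sup>2 / s)"
    using sum_mult_sq_le_weighted[OF \<open>s > 0\<close>] by (simp only:)
  also have "\<dots> \<le> (a\<^sup>2 + b\<^sup>2 + 2 * \<bar>a * b\<bar> * \<bar>y\<bar> / c) * (u\<^sup>2 + w\<^sup>2 / s)"
  proof (rule mult_right_mono)
    have "(a - b * y / c)\<^sup>2 + (b / c)\<^sup>2 * s = a\<^sup>2 - 2 * (a * b * y) / c + b\<^sup>2 * l / c\<^sup>2"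
      using c unfolding s_def by (simp add: field_simps power2_eq_square)
    moreover have "- (2 * (a * b * y) / c) \<le> 2 * \<bar>a * b\<bar> * \<bar>y\<bar> / c"
    proof -
      have "- (a * b * y) \<le> \<bar>a * b\<bar> * \<bar>y\<bar>"
        by (metis abs_ge_minus_self abs_mult)
      then have "2 * (- (a * b * y)) / c \<le> 2 * (\<bar>a * b\<bar> * \<bar>y\<bar>) / c"
        using c by (intro divide_right_mono) (auto simp: mult_ac)
      then show ?thesis
        by (simp add: mult.assoc)
    qed
    moreover have "b\<^sup>2 * l / c\<^sup>2 \<le> b\<^sup>2"
      using c lc by (simp add: divide_le_eq mult_left_mono)
    ultimately show "(a - b * y / c)\<^sup>2 + (b / c)\<^sup>2 * s \<le> a\<^sup>2 + b\<^sup>2 + 2 * \<bar>a * b\<bar> * \<bar>y\<bar> / c"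
      by linarith
    show "u\<^sup>2 + w\<^sup>2 / s \<ge> 0"
      using \<open>s > 0\<close> by simp
  qed
  also have "u\<^sup>2 + w\<^sup>2 / s = (s * u\<^sup>2 + w\<^sup>2) / s"
    using \<open>s > 0\<close> by (simp add: field_simps)
  finally show ?thesis
    unfolding s_def .
qed

lemma hermite_kernel_sq_le_bulk:
  assumes "y \<noteq> x" and "y\<^sup>2 < 2 * real n + 1"
  shows "(hermite_kernel n x y)\<^sup>2 \<le> real (Suc n) / 2 *
    ((hermite_pair_sq n x + 2 * \<bar>hermite_fun (Suc n) x * hermite_fun n x\<bar> * \<bar>y\<bar> / sqrt (2 * real (Suc n)))
     * (hermite_energy n 0 / (2 * real n + 1 - y\<^sup>2))) / (x - y)\<^sup>2"
proof -
  define c where "c = sqrt (2 * real (Suc n))"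
  define a where "a = hermite_fun (Suc n) x"
  define b where "b = hermite_fun n x"
  define u where "u = hermite_fun n y"
  define w where "w = y * u - c * hermite_fun (Suc n) y"
  have "c > 0"
    unfolding c_def by simp
  then have v: "hermite_fun (Suc n) y = (y * u - w) / c"
    unfolding w_def by simp
  have energy: "hermite_energy n y = (2 * real n + 1 - y\<^sup>2) * u\<^sup>2 + w\<^sup>2"
    unfolding hermite_energy_def u_def w_def c_def by simp
  have "(a * u - b * hermite_fun (Suc n) y)\<^sup>2
      \<le> (a\<^sup>2 + b\<^sup>2 + 2 * \<bar>a * b\<bar> * \<bar>y\<bar> / c) * (hermite_energy n y / (2 * real n + 1 - y\<^sup>2))"
    unfolding v energy using assms(2) \<open>c > 0\<close> by (intro bulk_cross_sq_le) (auto simp: c_def)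
  also have "\<dots> \<le> (a\<^sup>2 + b\<^sup>2 + 2 * \<bar>a * b\<bar> * \<bar>y\<bar> / c) * (hermite_energy n 0 / (2 * real n + 1 - y\<^sup>2))"
    using assms(2) \<open>c > 0\<close> hermite_energy_le_at_zero[of n y]
    by (intro mult_left_mono divide_right_mono) auto
  finally show ?thesis
    unfolding hermite_kernel_sq_eq[OF assms(1)] hermite_pair_sq_def a_def b_def u_def c_def
    by (intro divide_right_mono mult_left_mono) (auto simp: add.commute)
qed

lemma hermite_pair_sq_le_energy:
  assumes "e > 0" and "x\<^sup>2 < 2 * real n + 1"
    and "\<alpha> \<ge> (1 + x\<^sup>2 * (1 + 1 / e) / (2 * real (Suc n))) / (2 * real n + 1 - x\<^sup>2)"
    and "\<alpha> \<ge> (1 + e) / (2 * real (Suc n))"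
  shows "hermite_pair_sq n x \<le> \<alpha> * hermite_energy n 0"
proof -
  define c where "c = sqrt (2 * real (Suc n))"
  define b where "b = hermite_fun n x"
  define w where "w = x * b - c * hermite_fun (Suc n) x"
  have "c > 0" and cc: "c\<^sup>2 = 2 * real (Suc n)"
    unfolding c_def by simp_all
  have a: "hermite_fun (Suc n) x = (x * b - w) / c"
    unfolding w_def using \<open>c > 0\<close> by simp
  have energy: "hermite_energy n x = (2 * real n + 1 - x\<^sup>2) * b\<^sup>2 + w\<^sup>2"
    unfolding hermite_energy_def b_def w_def c_def by simp
  have "hermite_pair_sq n x \<le> (1 + x\<^sup>2 * (1 + 1 / e) / c\<^sup>2) * b\<^sup>2 + (1 + e) / c\<^sup>2 * w\<^sup>2"
    unfolding hermite_pair_sq_def b_def[symmetric] using young_sq_sum_le[OF \<open>c > 0\<close> \<open>e > 0\<close> a]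
    by (simp add: add.commute)
  also have "\<dots> \<le> (\<alpha> * (2 * real n + 1 - x\<^sup>2)) * b\<^sup>2 + \<alpha> * w\<^sup>2"
    using assms(2-4) unfolding cc by (intro add_mono mult_right_mono) (auto simp: divide_le_eq)
  also have "\<dots> = \<alpha> * hermite_energy n x"
    unfolding energy by (simp add: algebra_simps)
  also have "\<dots> \<le> \<alpha> * hermite_energy n 0"
  proof (rule mult_left_mono[OF hermite_energy_le_at_zero])
    have "0 < (1 + e) / c\<^sup>2"
      using \<open>e > 0\<close> \<open>c > 0\<close> by simp
    then show "0 \<le> \<alpha>"
      using assms(4) unfolding cc by linarith
  qed
  finally show ?thesis .
qed

lemma hermite_pair_sq_le_of_4x2:
  assumes "4 * x\<^sup>2 \<le> 2 * real n + 1"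
  shows "hermite_pair_sq n x \<le> 2 / (2 * real n + 1) * hermite_energy n 0"
proof (rule hermite_pair_sq_le_energy[where e = 1])
  define l where "l = 2 * real n + 1"
  have small: "4 * x\<^sup>2 \<le> l"
    using assms unfolding l_def .
  have "l > 0"
    unfolding l_def by simp
  then have "x\<^sup>2 < l"
    using small zero_le_power2[of x] by linarith
  have "x\<^sup>2 * (1 + 1 / 1) / (2 * real (Suc n)) \<le> 2 * x\<^sup>2 / l"
    unfolding l_def by (rule frac_le) auto
  also have "1 + 2 * x\<^sup>2 / l \<le> 2 / l * (l - x\<^sup>2)"
    using small \<open>l > 0\<close> by (simp add: field_simps)
  finally show "2 / (2 * real n + 1) \<ge> (1 + x\<^sup>2 * (1 + 1 / 1) / (2 * real (Suc n))) / (2 * real n + 1 - x\<^sup>2)"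
    using \<open>x\<^sup>2 < l\<close> unfolding l_def by (simp add: divide_le_eq)
  show "x\<^sup>2 < 2 * real n + 1"
    using \<open>x\<^sup>2 < l\<close> unfolding l_def .
qed (simp_all add: field_simps)

lemma hermite_pair_sq_le_of_64x2:
  assumes "64 * x\<^sup>2 \<le> 2 * real n + 1"
  shows "hermite_pair_sq n x \<le> 7 / (6 * (2 * real n + 1)) * hermite_energy n 0"
proof (rule hermite_pair_sq_le_energy[where e = "1 / 8"])
  define l where "l = 2 * real n + 1"
  have small: "64 * x\<^sup>2 \<le> l"
    using assms unfolding l_def .
  have "l > 0"
    unfolding l_def by simp
  then have "x\<^sup>2 < l"
    using small zero_le_power2[of x] by linarith
  have "x\<^sup>2 * (1 + 1 / (1 / 8)) / (2 * real (Suc n)) \<le> 9 * x\<^sup>2 / l"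
    unfolding l_def by (rule frac_le) auto
  also have "1 + 9 * x\<^sup>2 / l \<le> 7 / (6 * l) * (l - x\<^sup>2)"
    using small \<open>l > 0\<close> by (simp add: field_simps)
  finally show "7 / (6 * (2 * real n + 1))
      \<ge> (1 + x\<^sup>2 * (1 + 1 / (1 / 8)) / (2 * real (Suc n))) / (2 * real n + 1 - x\<^sup>2)"
    using \<open>x\<^sup>2 < l\<close> unfolding l_def by (simp add: divide_le_eq)
  show "x\<^sup>2 < 2 * real n + 1"
    using \<open>x\<^sup>2 < l\<close> unfolding l_def .
qed (simp_all add: field_simps)

text \<open>Majorant of \<open>k\<^sub>n(x,y)\<^sup>2\<close> in the bulk \<open>2\<bar>x\<bar> \<le> \<bar>y\<bar> \<le> \<surd>(2n+1)/2\<close>, with \<open>r = \<surd>(2n+1)\<close>.\<close>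
definition bulk_majorant :: "real \<Rightarrow> real \<Rightarrow> real \<Rightarrow> real" where
  "bulk_majorant r x y = 1 / (y - x)\<^sup>2 + 8 / (r * \<bar>y\<bar>)"

lemma bulk_majorant_ge:
  assumes "r > 0" and "2 * \<bar>x\<bar> \<le> \<bar>y\<bar>" and "y \<noteq> 0"
  shows "(1 + 2 * (\<bar>y\<bar> / r)) / (x - y)\<^sup>2 \<le> bulk_majorant r x y"
proof -
  have "\<bar>y\<bar> \<le> 2 * \<bar>x - y\<bar>"
    using assms(2) by (auto simp: abs_if split: if_split_asm)
  then have "\<bar>y\<bar>\<^sup>2 \<le> 4 * (x - y)\<^sup>2"
    using power_mono[of "\<bar>y\<bar>" "2 * \<bar>x - y\<bar>" 2] by (simp add: power_mult_distrib)
  moreover have "(x - y)\<^sup>2 > 0"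
    using assms(2,3) by auto
  ultimately have "\<bar>y\<bar> / (x - y)\<^sup>2 \<le> 4 / \<bar>y\<bar>"
    using assms(3) by (simp add: divide_simps power2_eq_square mult.commute)
  then have "2 / r * (\<bar>y\<bar> / (x - y)\<^sup>2) \<le> 2 / r * (4 / \<bar>y\<bar>)"
    using assms(1) by (intro mult_left_mono) auto
  then show ?thesis
    unfolding bulk_majorant_def by (simp add: add_divide_distrib power2_commute)
qed

lemma hermite_pair_sq_mult_energy_le:
  assumes "64 * x\<^sup>2 \<le> 2 * real n + 1"
  shows "hermite_pair_sq n x * hermite_energy n 0 \<le> 14 / (9 * pi)"
proof -
  define l where "l = 2 * real n + 1"
  define E where "E = hermite_energy n 0"
  have "l \<ge> 1"
    unfolding l_def by simp
  have "hermite_pair_sq n x * E \<le> 7 / (6 * l) * E * E"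
    using mult_right_mono[OF hermite_pair_sq_le_of_64x2[OF assms] hermite_energy_at_zero_nonneg]
    unfolding E_def l_def .
  also have "\<dots> = 7 / (6 * l) / pi * (E\<^sup>2 * pi)"
    by (simp add: power2_eq_square)
  also have "\<dots> \<le> 7 / (6 * l) / pi * (4 / 3 * l)"
    using hermite_energy_at_zero_sq_le[of n] \<open>l \<ge> 1\<close> unfolding E_def l_def
    by (intro mult_left_mono) auto
  finally show ?thesis
    using \<open>l \<ge> 1\<close> unfolding E_def by (simp add: field_simps)
qed

lemma hermite_pair_sq_add_cross_le:
  "hermite_pair_sq n x + 2 * \<bar>hermite_fun (Suc n) x * hermite_fun n x\<bar> * \<bar>y\<bar> / sqrt (2 * real (Suc n))
    \<le> hermite_pair_sq n x * (1 + \<bar>y\<bar> / sqrt (2 * real n + 1))"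
proof -
  have "2 * \<bar>hermite_fun (Suc n) x * hermite_fun n x\<bar> \<le> hermite_pair_sq n x"
    unfolding hermite_pair_sq_def
    using sum_squares_bound[of "\<bar>hermite_fun (Suc n) x\<bar>" "\<bar>hermite_fun n x\<bar>"]
    by (simp add: abs_mult add.commute)
  moreover have "\<bar>y\<bar> / sqrt (2 * real (Suc n)) \<le> \<bar>y\<bar> / sqrt (2 * real n + 1)"
    by (rule frac_le) auto
  ultimately have "2 * \<bar>hermite_fun (Suc n) x * hermite_fun n x\<bar> * (\<bar>y\<bar> / sqrt (2 * real (Suc n)))
      \<le> hermite_pair_sq n x * (\<bar>y\<bar> / sqrt (2 * real n + 1))"
    using hermite_pair_sq_nonneg by (intro mult_mono) auto
  then show ?thesis
    by (simp add: algebra_simps)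
qed

lemma bulk_prefactor_le:
  fixes l t P :: real
  assumes "l \<ge> 17" and "0 \<le> t" and "t \<le> 1 / 2" and "0 \<le> P" and "P \<le> 14 / (9 * pi)"
  shows "(l + 1) / 4 * P * ((1 + t) / (l * (1 - t\<^sup>2))) \<le> 7 / (17 * pi) * (1 + 2 * t)"
proof -
  have "t\<^sup>2 \<le> 1 / 4"
    using power_mono[OF assms(3,2), of 2] by (simp add: power_divide)
  then have "l * (1 - t\<^sup>2) > 0"
    using assms(1) by simp
  moreover have "(1 + 2 * t) / l * (l * (1 - t\<^sup>2)) = (1 + 2 * t) * (1 - t\<^sup>2)"
    using assms(1) by simp
  ultimately have "(1 + t) / (l * (1 - t\<^sup>2)) \<le> (1 + 2 * t) / l"
    using one_plus_le_mult_one_minus_sq[OF assms(2,3)] by (simp add: pos_divide_le_eq)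
  then have "(l + 1) / 4 * P * ((1 + t) / (l * (1 - t\<^sup>2))) \<le> (l + 1) / 4 * (14 / (9 * pi)) * ((1 + 2 * t) / l)"
    using assms \<open>l * (1 - t\<^sup>2) > 0\<close> by (intro mult_mono mult_left_mono) auto
  also have "\<dots> = (l + 1) / l * (7 / (18 * pi) * (1 + 2 * t))"
    using assms(1) by (simp add: field_simps)
  also have "\<dots> \<le> 18 / 17 * (7 / (18 * pi) * (1 + 2 * t))"
    using assms(1,2) by (intro mult_right_mono) (auto simp: field_simps)
  also have "\<dots> = 7 / (17 * pi) * (1 + 2 * t)"
    by (simp add: field_simps)
  finally show ?thesis .
qed

lemma hermite_kernel_sq_le_bulk_majorant:
  assumes "8 \<le> n" and "64 * x\<^sup>2 \<le> 2 * real n + 1"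
    and "2 * \<bar>x\<bar> \<le> \<bar>y\<bar>" and "4 * y\<^sup>2 \<le> 2 * real n + 1" and "y \<noteq> 0"
  shows "(hermite_kernel n x y)\<^sup>2 \<le> 7 / (17 * pi) * bulk_majorant (sqrt (2 * real n + 1)) x y"
proof -
  define l where "l = 2 * real n + 1"
  define r where "r = sqrt l"
  define t where "t = \<bar>y\<bar> / r"
  define A where "A = hermite_pair_sq n x"
  define E where "E = hermite_energy n 0"
  have "l \<ge> 17" and "r > 0" and "r\<^sup>2 = l"
    using assms(1) unfolding l_def r_def by simp_all
  have "(2 * \<bar>y\<bar>)\<^sup>2 \<le> r\<^sup>2"
    using assms(4) \<open>r\<^sup>2 = l\<close> unfolding l_def by (simp add: power_mult_distrib)
  then have "2 * \<bar>y\<bar> \<le> r"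
    by (rule power2_le_imp_le) (use \<open>r > 0\<close> in simp)
  then have t: "0 \<le> t" "t \<le> 1 / 2"
    unfolding t_def using \<open>r > 0\<close> by (simp_all add: field_simps)
  have ly: "l - y\<^sup>2 = l * (1 - t\<^sup>2)"
    unfolding t_def using \<open>l \<ge> 17\<close> \<open>r\<^sup>2 = l\<close> \<open>r > 0\<close> by (simp add: field_simps power_divide)
  have "y\<^sup>2 < l"
    using assms(4) \<open>l \<ge> 17\<close> unfolding l_def by simp
  have "y \<noteq> x"
    using assms(3,5) by auto
  then have "(hermite_kernel n x y)\<^sup>2 \<le> real (Suc n) / 2 *
      ((A + 2 * \<bar>hermite_fun (Suc n) x * hermite_fun n x\<bar> * \<bar>y\<bar> / sqrt (2 * real (Suc n)))
       * (E / (l - y\<^sup>2))) / (x - y)\<^sup>2"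
    using hermite_kernel_sq_le_bulk \<open>y\<^sup>2 < l\<close> unfolding A_def E_def l_def by blast
  also have "\<dots> \<le> real (Suc n) / 2 * (A * (1 + t) * (E / (l - y\<^sup>2))) / (x - y)\<^sup>2"
  proof -
    have "A + 2 * \<bar>hermite_fun (Suc n) x * hermite_fun n x\<bar> * \<bar>y\<bar> / sqrt (2 * real (Suc n)) \<le> A * (1 + t)"
      using hermite_pair_sq_add_cross_le[of n x y] unfolding A_def t_def r_def l_def .
    then show ?thesis
      using hermite_energy_at_zero_nonneg[of n, folded E_def] \<open>y\<^sup>2 < l\<close>
      by (intro divide_right_mono mult_left_mono mult_right_mono) auto
  qed
  also have "\<dots> = (l + 1) / 4 * (A * E) * ((1 + t) / (l * (1 - t\<^sup>2))) / (x - y)\<^sup>2"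
  proof -
    have half: "real (Suc n) / 2 = (l + 1) / 4"
      unfolding l_def by simp
    show ?thesis
      unfolding ly half by simp
  qed
  also have "\<dots> \<le> 7 / (17 * pi) * (1 + 2 * t) / (x - y)\<^sup>2"
    using bulk_prefactor_le[OF \<open>l \<ge> 17\<close> t] hermite_pair_sq_mult_energy_le[OF assms(2)]
      hermite_pair_sq_nonneg[of n x] hermite_energy_at_zero_nonneg[of n]
    unfolding A_def E_def by (intro divide_right_mono) auto
  also have "\<dots> = 7 / (17 * pi) * ((1 + 2 * t) / (x - y)\<^sup>2)"
    by simp
  also have "\<dots> \<le> 7 / (17 * pi) * bulk_majorant r x y"
    using bulk_majorant_ge[OF \<open>r > 0\<close> assms(3,5)] unfolding t_def by (intro mult_left_mono) auto
  finally show ?thesis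
    unfolding r_def l_def .
qed

section \<open>The tail integral\<close>

lemma set_integrable_bulk_majorant:
  assumes "r > 0" and "0 \<notin> {a..b}" and "x \<notin> {a..b}"
  shows "set_integrable lborel {a..b} (bulk_majorant r x)"
proof -
  have "continuous_on {a..b} (bulk_majorant r x)"
    unfolding bulk_majorant_def using assms by (intro continuous_intros) auto
  then show ?thesis
    unfolding set_integrable_def by (rule borel_integrable_compact[OF compact_Icc])
qed

lemma integral_bulk_majorant:
  assumes "x < p" and "0 < p" and "p \<le> Y" and "r > 0"
  shows "(LINT y:{p..Y}|lborel. bulk_majorant r x y) = 1 / (p - x) - 1 / (Y - x) + 8 / r * (ln Y - ln p)"
proof -
  have "(LBINT y=p..Y. bulk_majorant r x y) = (- 1 / (Y - x) + 8 / r * ln Y) - (- 1 / (p - x) + 8 / r * ln p)"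
  proof (rule interval_integral_FTC_finite)
    show "continuous_on {min p Y..max p Y} (bulk_majorant r x)"
      unfolding bulk_majorant_def using assms by (intro continuous_intros) auto
    fix y
    assume "min p Y \<le> y" "y \<le> max p Y"
    then have "y - x > 0" and "y > 0"
      using assms by auto
    then have "((\<lambda>y. - 1 / (y - x) + 8 / r * ln y) has_real_derivative bulk_majorant r x y) (at y)"
      unfolding bulk_majorant_def using \<open>r > 0\<close>
      by (auto intro!: derivative_eq_intros simp: field_simps power2_eq_square)
    then show "((\<lambda>y. - 1 / (y - x) + 8 / r * ln y) has_vector_derivative bulk_majorant r x y)
        (at y within {min p Y..max p Y})"
      by (simp add: has_real_derivative_iff_has_vector_derivative[symmetric] has_field_derivative_at_within)
  qed
  then show ?thesis
    using assms(3) by (simp add: interval_integral_Icc algebra_simps diff_divide_distrib)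
qed

lemma set_integral_bulk_majorant_reflect:
  assumes "p \<le> Y"
  shows "(LINT y:{-Y..-p}|lborel. bulk_majorant r x y) = (LINT y:{p..Y}|lborel. bulk_majorant r (- x) y)"
proof -
  have "bulk_majorant r x (- y) = bulk_majorant r (- x) y" for y
    unfolding bulk_majorant_def by (simp add: power2_commute add.commute)
  then show ?thesis
    using assms interval_integral_reflect[of "- Y" "- p" "bulk_majorant r x"]
    by (simp add: interval_integral_Icc)
qed

lemma set_integral_bulk_majorant_le:
  assumes "\<bar>x\<bar> \<le> T" and "1 \<le> 2 * T" and "2 * T \<le> Y" and "Y \<le> r"
  shows "(LINT y:{2 * T..Y}|lborel. bulk_majorant r x y) \<le> 1 / (2 * T - x) + 8 / r * ln r"
proof -
  have "r > 0"
    using assms by linarith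
  have "(LINT y:{2 * T..Y}|lborel. bulk_majorant r x y)
      = 1 / (2 * T - x) - 1 / (Y - x) + 8 / r * (ln Y - ln (2 * T))"
    using assms by (intro integral_bulk_majorant) auto
  also have "\<dots> \<le> 1 / (2 * T - x) + 8 / r * ln r"
  proof -
    have "1 / (Y - x) \<ge> 0"
      using assms by auto
    moreover have "ln Y - ln (2 * T) \<le> ln r"
      using assms by (smt (verit) ln_ge_zero ln_le_cancel_iff)
    then have "8 / r * (ln Y - ln (2 * T)) \<le> 8 / r * ln r"
      using \<open>r > 0\<close> by (intro mult_left_mono) auto
    ultimately show ?thesis
      by linarith
  qed
  finally show ?thesis .
qed

lemma set_integral_hermite_kernel_sq_le_majorant:
  assumes "T \<ge> 2" and "\<bar>x\<bar> \<le> T" and "64 * T\<^sup>2 \<le> 2 * real n + 1"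
    and bulk: "\<And>y. y \<in> {a..b} \<Longrightarrow> 2 * T \<le> \<bar>y\<bar> \<and> \<bar>y\<bar> \<le> sqrt (2 * real n + 1) / 2"
  shows "(LINT y:{a..b}|lborel. (hermite_kernel n x y)\<^sup>2)
    \<le> 7 / (17 * pi) * (LINT y:{a..b}|lborel. bulk_majorant (sqrt (2 * real n + 1)) x y)"
proof -
  define l where "l = 2 * real n + 1"
  define r where "r = sqrt l"
  have "r > 0" and "r\<^sup>2 = l" and "l \<ge> 256"
    using assms(1,3) power_mono[of 2 T 2] unfolding r_def l_def by auto
  have "64 * x\<^sup>2 \<le> l"
    using assms(2,3) power_mono[of "\<bar>x\<bar>" T 2] unfolding l_def by simp
  have "8 \<le> n"
    using \<open>l \<ge> 256\<close> unfolding l_def by simp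
  have "(hermite_kernel n x y)\<^sup>2 \<le> 7 / (17 * pi) * bulk_majorant r x y" if "y \<in> {a..b}" for y
  proof -
    have "2 * T \<le> \<bar>y\<bar>" and "\<bar>y\<bar> \<le> r / 2"
      using bulk[OF that] unfolding r_def l_def by auto
    then have "4 * y\<^sup>2 \<le> l"
      using power_mono[of "\<bar>y\<bar>" "r / 2" 2] \<open>r\<^sup>2 = l\<close> by (simp add: power_divide)
    then show ?thesis
      using hermite_kernel_sq_le_bulk_majorant[OF \<open>8 \<le> n\<close>] \<open>64 * x\<^sup>2 \<le> l\<close> assms(1,2) \<open>2 * T \<le> \<bar>y\<bar>\<close>
      unfolding r_def l_def by auto
  qed
  moreover have "0 \<notin> {a..b}" and "x \<notin> {a..b}"
    using bulk assms(1,2) by force+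
  ultimately have "(LINT y:{a..b}|lborel. (hermite_kernel n x y)\<^sup>2)
      \<le> (LINT y:{a..b}|lborel. 7 / (17 * pi) * bulk_majorant r x y)"
    using \<open>r > 0\<close> by (intro set_integral_mono set_integrable_hermite_kernel_sq set_integrable_mult_right
        set_integrable_bulk_majorant) auto
  then show ?thesis
    unfolding r_def l_def by simp
qed

lemma set_integral_hermite_kernel_sq_bulk:
  assumes "T \<ge> 2" and "\<bar>x\<bar> \<le> T" and "64 * T\<^sup>2 \<le> 2 * real n + 1"
  defines "Y \<equiv> sqrt (2 * real n + 1) / 2"
  shows "(LINT y:{2 * T..Y}|lborel. (hermite_kernel n x y)\<^sup>2) + (LINT y:{-Y..-(2 * T)}|lborel. (hermite_kernel n x y)\<^sup>2)
    \<le> 7 / (17 * pi) * (4 / (3 * T) + 8 * ln (2 * real n + 1) / sqrt (2 * real n + 1))"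
proof -
  define l where "l = 2 * real n + 1"
  define r where "r = sqrt l"
  define D where "D = 7 / (17 * pi)"
  let ?M = "\<lambda>x. LINT y:{2 * T..Y}|lborel. bulk_majorant r x y"
  have "r\<^sup>2 = l" and "l \<ge> 1" and "Y = r / 2"
    unfolding Y_def r_def l_def by simp_all
  have "(8 * T)\<^sup>2 \<le> r\<^sup>2"
    using assms(3) \<open>r\<^sup>2 = l\<close> unfolding l_def by (simp add: power_mult_distrib)
  then have "8 * T \<le> r"
    by (rule power2_le_imp_le) (use \<open>l \<ge> 1\<close> in \<open>simp add: r_def\<close>)
  let ?c = "8 / r * ln r"
  have "D \<ge> 0"
    unfolding D_def by simp
  have "(LINT y:{2 * T..Y}|lborel. (hermite_kernel n x y)\<^sup>2) \<le> D * ?M x"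
    using set_integral_hermite_kernel_sq_le_majorant[OF assms(1-3), of "2 * T" Y] assms(1)
    unfolding D_def Y_def r_def l_def by auto
  also have "\<dots> \<le> D * (1 / (2 * T - x) + ?c)"
    using assms(1,2) \<open>8 * T \<le> r\<close> \<open>Y = r / 2\<close> \<open>D \<ge> 0\<close>
    by (intro mult_left_mono set_integral_bulk_majorant_le) auto
  finally have pos: "(LINT y:{2 * T..Y}|lborel. (hermite_kernel n x y)\<^sup>2) \<le> D * (1 / (2 * T - x) + ?c)" .
  have "(LINT y:{-Y..-(2 * T)}|lborel. (hermite_kernel n x y)\<^sup>2) \<le> D * ?M (- x)"
    using set_integral_hermite_kernel_sq_le_majorant[OF assms(1-3), of "-Y" "-(2 * T)"] assms(1)
      set_integral_bulk_majorant_reflect[of "2 * T" Y r x] \<open>8 * T \<le> r\<close> \<open>Y = r / 2\<close>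
    unfolding D_def Y_def r_def l_def by auto
  also have "\<dots> \<le> D * (1 / (2 * T + x) + ?c)"
    using assms(1,2) \<open>8 * T \<le> r\<close> \<open>Y = r / 2\<close> \<open>D \<ge> 0\<close> set_integral_bulk_majorant_le[of "- x" T Y r]
    by (intro mult_left_mono) auto
  finally have neg: "(LINT y:{-Y..-(2 * T)}|lborel. (hermite_kernel n x y)\<^sup>2) \<le> D * (1 / (2 * T + x) + ?c)" .
  have "(LINT y:{2 * T..Y}|lborel. (hermite_kernel n x y)\<^sup>2) + (LINT y:{-Y..-(2 * T)}|lborel. (hermite_kernel n x y)\<^sup>2)
      \<le> D * (1 / (2 * T - x) + 1 / (2 * T + x)) + 2 * (D * ?c)"
    using add_mono[OF pos neg] by (simp add: algebra_simps)
  also have "\<dots> \<le> D * (4 / (3 * T)) + 2 * (D * ?c)"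
    using inverse_add_inverse_le[OF assms(2)] assms(1) \<open>D \<ge> 0\<close> by (intro add_right_mono mult_left_mono) auto
  also have "\<dots> = D * (4 / (3 * T) + 8 * ln l / r)"
  proof -
    have "ln r = ln l / 2"
      unfolding r_def using \<open>l \<ge> 1\<close> by (simp add: ln_sqrt)
    then show ?thesis
      by (simp add: algebra_simps)
  qed
  finally show ?thesis
    unfolding D_def r_def l_def .
qed

lemma set_integral_hermite_kernel_sq_outer:
  assumes "64 * x\<^sup>2 \<le> 2 * real n + 1"
  shows "(LINT y:{y. sqrt (2 * real n + 1) / 2 < \<bar>y\<bar>}|lborel. (hermite_kernel n x y)\<^sup>2)
    \<le> 13 / sqrt (2 * real n + 1)"
proof -
  define l where "l = 2 * real n + 1"
  define r where "r = sqrt l"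
  have "l \<ge> 1" and "r > 0" and "r\<^sup>2 = l" and "r * r = l"
    unfolding r_def l_def by simp_all
  have "(8 * \<bar>x\<bar>)\<^sup>2 \<le> r\<^sup>2"
    using assms \<open>r\<^sup>2 = l\<close> unfolding l_def by (simp add: power_mult_distrib)
  then have "8 * \<bar>x\<bar> \<le> r"
    by (rule power2_le_imp_le) (use \<open>r > 0\<close> in simp)
  have "hermite_pair_sq n x \<le> 7 / (6 * l) * (2 / 3 * r)"
    using order_trans[OF hermite_pair_sq_le_of_64x2[OF assms] mult_left_mono[OF hermite_energy_at_zero_le]]
    unfolding r_def l_def by simp
  then have "real (Suc n) * hermite_pair_sq n x / (r / 4)\<^sup>2 \<le> real (Suc n) * (7 / (6 * l) * (2 / 3 * r)) / (r / 4)\<^sup>2"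
    by (intro divide_right_mono mult_left_mono) auto
  also have "\<dots> = 56 / 9 * ((l + 1) / l) / r"
  proof -
    have "real (Suc n) = (l + 1) / 2"
      unfolding l_def by simp
    then show ?thesis
      unfolding \<open>r * r = l\<close>[symmetric] using \<open>r > 0\<close> by (simp add: field_simps power2_eq_square)
  qed
  also have "\<dots> \<le> 13 / r"
    using \<open>l \<ge> 1\<close> \<open>r > 0\<close> by (simp add: field_simps)
  finally have "real (Suc n) * hermite_pair_sq n x / (r / 4)\<^sup>2 \<le> 13 / r" .
  moreover have "(LINT y:{y. r / 2 < \<bar>y\<bar>}|lborel. (hermite_kernel n x y)\<^sup>2)
      \<le> real (Suc n) * hermite_pair_sq n x / (r / 4)\<^sup>2"
  proof (rule set_integral_hermite_kernel_sq_le_far)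
    show "{y. r / 2 < \<bar>y\<bar>} \<in> sets lborel"
      by measurable
    show "r / 4 \<le> \<bar>x - y\<bar>" if "y \<in> {y. r / 2 < \<bar>y\<bar>}" for y
      using that \<open>8 * \<bar>x\<bar> \<le> r\<close> by (auto simp: abs_if split: if_split_asm)
  qed (use \<open>r > 0\<close> in simp)
  ultimately show ?thesis
    unfolding r_def l_def by linarith
qed

lemma tail_constants_le:
  fixes T l r :: real
  assumes "T \<ge> 2" and "l \<ge> 17" and "r > 0"
  shows "7 / (17 * pi) * (4 / (3 * T) + 8 * ln l / r) + 13 / r \<le> 2 / (pi\<^sup>2 * T) + 12 * T\<^sup>2 / r * ln l"
proof -
  define D where "D = 7 / (17 * pi)"
  have "D * (4 / (3 * T)) \<le> 2 / (pi\<^sup>2 * T)"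
    using pi_approx(2) pi_gt3 assms(1) unfolding D_def by (simp add: field_simps power2_eq_square)
  moreover have "D * (8 * ln l / r) + 13 / r \<le> 12 * T\<^sup>2 / r * ln l"
  proof -
    have "D * 8 \<le> 2"
      unfolding D_def using pi_gt3 by (simp add: field_simps)
    moreover have "ln l \<ge> 2"
      using assms(2) by (rule two_le_ln)
    moreover have "T\<^sup>2 \<ge> 4"
      using power_mono[OF assms(1), of 2] by simp
    ultimately have "D * 8 * ln l \<le> 2 * ln l" and "4 * ln l \<le> T\<^sup>2 * ln l"
      by (auto intro: mult_right_mono)
    then have "D * 8 * ln l + 13 \<le> 12 * T\<^sup>2 * ln l"
      using \<open>ln l \<ge> 2\<close> by linarith
    then have "(D * 8 * ln l + 13) / r \<le> 12 * T\<^sup>2 * ln l / r"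
      using assms(3) by (intro divide_right_mono) auto
    then show ?thesis
      by (simp add: add_divide_distrib)
  qed
  ultimately show ?thesis
    unfolding D_def by (simp add: algebra_simps)
qed

lemma hermite_kernel_tail_integral_le_small_n:
  assumes "T \<ge> 2" and "\<bar>x\<bar> \<le> T" and "2 * T\<^sup>2 \<le> real n" and "2 * real n + 1 < 64 * T\<^sup>2"
  shows "(LINT y:{y. \<bar>y\<bar> \<ge> 2 * T}|lborel. (hermite_kernel n x y)\<^sup>2)
    \<le> 12 * T\<^sup>2 / sqrt (2 * real n + 1) * ln (2 * real n + 1)"
proof -
  define l where "l = 2 * real n + 1"
  define r where "r = sqrt l"
  have "T\<^sup>2 \<ge> 4"
    using power_mono[OF assms(1), of 2] by simp
  have "x\<^sup>2 \<le> T\<^sup>2"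
    using power_mono[OF assms(2), of 2] by simp
  have "l \<ge> 17" and "r > 0" and "r * r = l"
    using assms(3) \<open>T\<^sup>2 \<ge> 4\<close> unfolding r_def l_def by auto
  have "(LINT y:{y. \<bar>y\<bar> \<ge> 2 * T}|lborel. (hermite_kernel n x y)\<^sup>2) \<le> real (Suc n) * hermite_pair_sq n x / T\<^sup>2"
    using assms(1,2) by (intro set_integral_hermite_kernel_sq_le_far) (auto simp: abs_if split: if_split_asm)
  also have "\<dots> \<le> real (Suc n) * (2 / l * (2 / 3 * r)) / T\<^sup>2"
  proof (intro divide_right_mono mult_left_mono)
    have "4 * x\<^sup>2 \<le> 2 * real n + 1"
      using assms(3) \<open>x\<^sup>2 \<le> T\<^sup>2\<close> by simp
    then show "hermite_pair_sq n x \<le> 2 / l * (2 / 3 * r)"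
      using order_trans[OF hermite_pair_sq_le_of_4x2 mult_left_mono[OF hermite_energy_at_zero_le]]
      unfolding r_def l_def by simp
  qed simp_all
  also have "\<dots> = (l + 1) / l * (2 / 3 * r) / T\<^sup>2"
    unfolding l_def by (simp add: field_simps)
  also have "\<dots> \<le> 4 / 3 * r / T\<^sup>2"
    using \<open>l \<ge> 17\<close> \<open>r > 0\<close> by (intro divide_right_mono) (auto simp: field_simps)
  also have "\<dots> \<le> 12 * T\<^sup>2 / r * ln l"
  proof -
    have "4 / 3 * l \<le> 24 * T\<^sup>2 * T\<^sup>2"
      using assms(4) \<open>T\<^sup>2 \<ge> 4\<close> mult_right_mono[OF \<open>T\<^sup>2 \<ge> 4\<close>, of "T\<^sup>2"] unfolding l_def by simp
    also have "\<dots> \<le> 12 * T\<^sup>2 * T\<^sup>2 * ln l"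
      using mult_left_mono[OF two_le_ln[OF \<open>l \<ge> 17\<close>], of "12 * T\<^sup>2 * T\<^sup>2"] by simp
    finally have "4 / 3 * (r * r) \<le> 12 * T\<^sup>2 * T\<^sup>2 * ln l"
      using \<open>r * r = l\<close> by simp
    then show ?thesis
      using \<open>r > 0\<close> assms(1) by (simp add: field_simps power2_eq_square)
  qed
  finally show ?thesis
    unfolding r_def l_def by simp
qed

lemma hermite_kernel_tail_integral_le_large_n:
  assumes "T \<ge> 2" and "\<bar>x\<bar> \<le> T" and "64 * T\<^sup>2 \<le> 2 * real n + 1"
  shows "(LINT y:{y. \<bar>y\<bar> \<ge> 2 * T}|lborel. (hermite_kernel n x y)\<^sup>2)
    \<le> 2 / (pi\<^sup>2 * T) + 12 * T\<^sup>2 / sqrt (2 * real n + 1) * ln (2 * real n + 1)"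
proof -
  define l where "l = 2 * real n + 1"
  define r where "r = sqrt l"
  define Y where "Y = r / 2"
  define D where "D = 7 / (17 * pi)"
  let ?I = "\<lambda>A. LINT y:A|lborel. (hermite_kernel n x y)\<^sup>2"
  have "T\<^sup>2 \<ge> 4"
    using power_mono[OF assms(1), of 2] by simp
  have "l \<ge> 17" and "r > 0"
    using assms(3) \<open>T\<^sup>2 \<ge> 4\<close> unfolding r_def l_def by auto
  have "(8 * T)\<^sup>2 \<le> r\<^sup>2"
    using assms(3) unfolding r_def l_def by (simp add: power_mult_distrib)
  then have "8 * T \<le> r"
    by (rule power2_le_imp_le) (use \<open>r > 0\<close> in simp)
  have "Y \<ge> 2 * T"
    using \<open>8 * T \<le> r\<close> assms(1) unfolding Y_def by simp
  have "?I {y. \<bar>y\<bar> \<ge> 2 * T} = (?I {2 * T..Y} + ?I {-Y..-(2 * T)}) + ?I {y. Y < \<bar>y\<bar>}"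
    using assms(1) \<open>Y \<ge> 2 * T\<close> by (intro set_integral_abs_ge_split set_integrable_hermite_kernel_sq) auto
  also have "\<dots> \<le> D * (4 / (3 * T) + 8 * ln l / r) + 13 / r"
  proof (rule add_mono)
    show "?I {2 * T..Y} + ?I {-Y..-(2 * T)} \<le> D * (4 / (3 * T) + 8 * ln l / r)"
      using set_integral_hermite_kernel_sq_bulk[OF assms] unfolding D_def Y_def r_def l_def .
    have "64 * x\<^sup>2 \<le> 2 * real n + 1"
      using assms(2,3) power_mono[of "\<bar>x\<bar>" T 2] by simp
    then show "?I {y. Y < \<bar>y\<bar>} \<le> 13 / r"
      using set_integral_hermite_kernel_sq_outer unfolding Y_def r_def l_def by blast
  qed
  also have "\<dots> \<le> 2 / (pi\<^sup>2 * T) + 12 * T\<^sup>2 / r * ln l"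
    unfolding D_def using assms(1) \<open>l \<ge> 17\<close> \<open>r > 0\<close> by (rule tail_constants_le)
  finally show ?thesis
    unfolding r_def l_def .
qed

theorem mainTheorem6:
  fixes T x :: real and n :: nat
  assumes "T \<ge> 2" and "real n \<ge> 2 * T\<^sup>2" and "\<bar>x\<bar> \<le> T"
  shows "(LINT y:{y. \<bar>y\<bar> \<ge> 2 * T}|lborel. (hermite_kernel n x y)\<^sup>2)
           \<le> 2 / (pi\<^sup>2 * T) + 12 * T\<^sup>2 / sqrt (2 * real n + 1) * ln (2 * real n + 1)"
proof (cases "64 * T\<^sup>2 \<le> 2 * real n + 1")
  case True
  then show ?thesis
    using hermite_kernel_tail_integral_le_large_n assms(1,3) by blast
next
  case False
  then have "(LINT y:{y. \<bar>y\<bar> \<ge> 2 * T}|lborel. (hermite_kernel n x y)\<^sup>2)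
      \<le> 12 * T\<^sup>2 / sqrt (2 * real n + 1) * ln (2 * real n + 1)"
    using hermite_kernel_tail_integral_le_small_n assms by simp
  moreover have "0 \<le> 2 / (pi\<^sup>2 * T)"
    using assms(1) by simp
  ultimately show ?thesis
    by linarith
qed

end
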